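(* For a pyramid $\mathcal P$, the following are equivalent: (i) the observable diameter of $\mathcal P$ is finite; (ii) $t\mathcal P$ converges weakly to $\{*\}$ as $t\to0+$.
   Context: An mm-space is a triple $(X,d_X,\mu_X)$ with $(X,d_X)$ complete separable metric and $\mu_X$ a Borel probability measure; $\mathcal X$ is the set of mm-isomorphism classes; $*$ is the one-point mm-space. $Y\prec X$ means there is a 1-Lipschitz $f:X\to Y$ with $f_*\mu_X=\mu_Y$. The box distance $\square(X,Y)$ is the infimum of $\max\{\operatorname{dis}(S),1-\pi(S)\}$ over couplings $\pi$ of $\mu_X,\mu_Y$ and Borel $S\subset X\times Y$, $\operatorname{dis}(S)=\sup\{|d_X(x,x')-d_Y(y,y')|:(x,y),(x',y')\in S\}$. A pyramid is a nonempty box-closed subset of $\mathcal X$ closed downward under $\prec$ and directed. Pyramids $\mathcal P_k$ converge weakly to $\mathcal P$ if $\lim_k\inf_{Y\in\mathcal P_k}\square(X,Y)=0$ for all $X\in\mathcal P$ and $\liminf_k\inf_{Y\in\mathcal P_k}\square(X,Y)>0$ for all $X\notin\mathcal P$; convergence as $t\to0+$ means along every sequence $t_k\to0+$. For $t>0$, $tX=(X,td_X,\mu_X)$, $t\mathcal P=\{tX:X\in\mathcal P\}$. For $0<\kappa<1$: $\operatorname{diam}(\mu;1-\kappa)=\inf\{\operatorname{diam}A:A\text{ Borel},\mu(A)\ge1-\kappa\}$, $\operatorname{ObsDiam}(X;-\kappa)=\sup\{\operatorname{diam}(f_*\mu_X;1-\kappa):f:X\to\mathbb R\text{ 1-Lipschitz}\}$,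 $\operatorname{ObsDiam}(\mathcal P;-\kappa)=\sup_{X\in\mathcal P}\operatorname{ObsDiam}(X;-\kappa)$. The observable diameter of $\mathcal P$ is finite if $\operatorname{ObsDiam}(\mathcal P;-\kappa)<\infty$ for every $0<\kappa<1$. *)

theory Defs
  imports "HOL-Probability.Probability"
begin

text \<open>
  Every complete separable metric space has cardinality
  at most the continuum, hence is isometric to a metric space whose carrier is a subset
  of the reals.  We therefore represent an mm-space by a triple (X, d, mu) with
  X a set of reals, d a metric on X and mu a Borel probability measure on (X, d).
  The set of mm-isomorphism classes is represented by (isomorphism-invariant) sets of
  such triples; all notions below are invariant under mm-isomorphism.
\<close>

type_synonym mm = "real set \<times> (real \<Rightarrow> real \<Rightarrow> real) \<times> real measure"

definition mm_carrier :: "mm \<Rightarrow> real set" where "mm_carrier X = fst X"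
definition mm_dist :: "mm \<Rightarrow> real \<Rightarrow> real \<Rightarrow> real" where "mm_dist X = fst (snd X)"
definition mm_meas :: "mm \<Rightarrow> real measure" where "mm_meas X = snd (snd X)"

definition metric_borel :: "real set \<Rightarrow> (real \<Rightarrow> real \<Rightarrow> real) \<Rightarrow> real measure" where
  "metric_borel S d = sigma S {U. openin (Metric_space.mtopology S d) U}"

definition mm_space :: "mm \<Rightarrow> bool" where
  "mm_space X \<longleftrightarrow>
     Metric_space (mm_carrier X) (mm_dist X) \<and>
     Metric_space.mcomplete (mm_carrier X) (mm_dist X) \<and>
     separable_space (Metric_space.mtopology (mm_carrier X) (mm_dist X)) \<and>
     sets (mm_meas X) = sets (metric_borel (mm_carrier X) (mm_dist X)) \<and>
     prob_space (mm_meas X)"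

definition mm_star :: mm where
  "mm_star = ({0}, (\<lambda>x y. 0), return (metric_borel {0} (\<lambda>x y. 0)) 0)"

text \<open>Lipschitz order: mm_dominated Y X means Y \<prec> X, i.e. there is a
  1-Lipschitz map f : X \<rightarrow> Y with f_* mu_X = mu_Y.\<close>
definition mm_dominated :: "mm \<Rightarrow> mm \<Rightarrow> bool" where
  "mm_dominated Y X \<longleftrightarrow>
     (\<exists>f. f \<in> mm_carrier X \<rightarrow> mm_carrier Y \<and>
          (\<forall>x\<in>mm_carrier X. \<forall>x'\<in>mm_carrier X. mm_dist Y (f x) (f x') \<le> mm_dist X x x') \<and>
          f \<in> measurable (mm_meas X) (mm_meas Y) \<and>
          distr (mm_meas X) (mm_meas Y) f = mm_meas Y)"

definition couplings :: "real measure \<Rightarrow> real measure \<Rightarrow> (real \<times> real) measure set" where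
  "couplings mu nu = {pi. sets pi = sets (mu \<Otimes>\<^sub>M nu) \<and> prob_space pi \<and>
      distr pi mu fst = mu \<and> distr pi nu snd = nu}"

text \<open>Distortion of a set S \<subseteq> X \<times> Y (as an extended real; for empty S it is -\<infinity>,
  which does not affect the box distance since then 1 - pi(S) = 1).\<close>
definition distortion :: "mm \<Rightarrow> mm \<Rightarrow> (real \<times> real) set \<Rightarrow> ereal" where
  "distortion X Y S = (SUP p\<in>S. SUP q\<in>S.
      ereal \<bar>mm_dist X (fst p) (fst q) - mm_dist Y (snd p) (snd q)\<bar>)"

definition box_dist :: "mm \<Rightarrow> mm \<Rightarrow> ereal" where
  "box_dist X Y = (INF pi\<in>couplings (mm_meas X) (mm_meas Y).
      INF S\<in>sets (mm_meas X \<Otimes>\<^sub>M mm_meas Y).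
        max (distortion X Y S) (ereal (1 - measure pi S)))"

definition box_closed :: "mm set \<Rightarrow> bool" where
  "box_closed P \<longleftrightarrow> (\<forall>X. mm_space X \<and> (INF Y\<in>P. box_dist X Y) = 0 \<longrightarrow> X \<in> P)"

definition pyramid :: "mm set \<Rightarrow> bool" where
  "pyramid P \<longleftrightarrow> P \<noteq> {} \<and> P \<subseteq> {X. mm_space X} \<and> box_closed P \<and>
     (\<forall>X\<in>P. \<forall>Y. mm_space Y \<and> mm_dominated Y X \<longrightarrow> Y \<in> P) \<and>
     (\<forall>X\<in>P. \<forall>X'\<in>P. \<exists>Y\<in>P. mm_dominated X Y \<and> mm_dominated X' Y)"

text \<open>The pyramid {*}: all mm-spaces mm-isomorphic to the one-point space.\<close>
definition pyr_star :: "mm set" where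
  "pyr_star = {X. mm_space X \<and> mm_dominated X mm_star}"

definition pyr_weak_conv :: "(nat \<Rightarrow> mm set) \<Rightarrow> mm set \<Rightarrow> bool" where
  "pyr_weak_conv Ps P \<longleftrightarrow>
     (\<forall>X\<in>P. (\<lambda>k. INF Y\<in>Ps k. box_dist X Y) \<longlonglongrightarrow> 0) \<and>
     (\<forall>X. mm_space X \<and> X \<notin> P \<longrightarrow> liminf (\<lambda>k. INF Y\<in>Ps k. box_dist X Y) > 0)"

definition mm_scale :: "real \<Rightarrow> mm \<Rightarrow> mm" where
  "mm_scale t X = (mm_carrier X, (\<lambda>x y. t * mm_dist X x y), mm_meas X)"

definition pyr_scale :: "real \<Rightarrow> mm set \<Rightarrow> mm set" where
  "pyr_scale t P = mm_scale t ` P"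

definition partial_diam :: "real measure \<Rightarrow> real \<Rightarrow> ereal" where
  "partial_diam nu kappa = (INF A\<in>{A\<in>sets borel. measure nu A \<ge> 1 - kappa}.
      (SUP x\<in>A. SUP y\<in>A. ereal \<bar>x - y\<bar>))"

definition obs_diam :: "mm \<Rightarrow> real \<Rightarrow> ereal" where
  "obs_diam X kappa = (SUP f\<in>{f. \<forall>x\<in>mm_carrier X. \<forall>x'\<in>mm_carrier X.
        \<bar>f x - f x'\<bar> \<le> mm_dist X x x'}.
      partial_diam (distr (mm_meas X) borel f) kappa)"

definition obs_diam_pyr :: "mm set \<Rightarrow> real \<Rightarrow> ereal" where
  "obs_diam_pyr P kappa = (SUP X\<in>P. obs_diam X kappa)"

definition obs_diam_finite :: "mm set \<Rightarrow> bool" where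
  "obs_diam_finite P \<longleftrightarrow> (\<forall>kappa. 0 < kappa \<and> kappa < 1 \<longrightarrow> obs_diam_pyr P kappa < \<infinity>)"

end

theory Submission
  imports Defs
begin

text \<open>
  If X is not a Dirac mass, it has a point x and a radius r > 0 such that both the ball of
  radius r and the complement of the ball of radius 2r around x have positive mass.  A
  coupling realising a small box distance between X and tY transports the 1-Lipschitz
  function d(x, -) to a 1-Lipschitz function on Y (by an inf-convolution along the coupled
  set) that separates two sets of positive mass by about r/t, so ObsDiam(Y) \<ge> r/(2t) for
  some Y in P.  With finite observable diameter this fails for small t, hence X stays away
  from tP, while Dirac masses lie in every tP.

  Conversely, if ObsDiam(P; -\<kappa>) = \<infinity>, then for every N some 1-Lipschitz image \<nu> of a space
  of P in the line has two tails of mass at least \<kappa>/2 around a gap of length N carrying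
  mass at most 1/N (pigeonhole on the cdf).  Clamping to the gap and rescaling by 1/N gives a
  space of P within box distance |p - \<alpha>| + 1/N of the two-point space with weights p and
  1 - p, where \<alpha> is the mass of the left tail.  Along a subsequence \<alpha> converges to some
  p in (0, 1), and that two-point space, which is not in {*}, is approximated by tP.
\<close>

abbreviation mm_lipschitz :: "mm \<Rightarrow> (real \<Rightarrow> real) \<Rightarrow> bool" where
  "mm_lipschitz X f \<equiv>
     \<forall>x\<in>mm_carrier X. \<forall>x'\<in>mm_carrier X. \<bar>f x - f x'\<bar> \<le> mm_dist X x x'"

lemma mm_tuple [simp]:
  "mm_carrier (C, d, \<mu>) = C" "mm_dist (C, d, \<mu>) = d" "mm_meas (C, d, \<mu>) = \<mu>"
  by (simp_all add: mm_carrier_def mm_dist_def mm_meas_def)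

lemma mm_scale_simps [simp]:
  "mm_carrier (mm_scale t X) = mm_carrier X"
  "mm_dist (mm_scale t X) = (\<lambda>x y. t * mm_dist X x y)"
  "mm_meas (mm_scale t X) = mm_meas X"
  by (simp_all add: mm_scale_def)

lemma
  assumes "Metric_space S d"
  shows sets_metric_borel:
      "sets (metric_borel S d) = sigma_sets S {U. openin (Metric_space.mtopology S d) U}"
    and space_metric_borel: "space (metric_borel S d) = S"
proof -
  interpret Metric_space S d by fact
  have "{U. openin mtopology U} \<subseteq> Pow S" using openin_subset by fastforce
  then show "sets (metric_borel S d) = sigma_sets S {U. openin mtopology U}"
    and "space (metric_borel S d) = S"
    unfolding metric_borel_def by (simp_all add: sets_measure_of_conv space_measure_of_conv)
qed

lemma
  assumes "mm_space X"
  shows mm_space_prob_space: "prob_space (mm_meas X)"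
    and mm_space_Metric_space: "Metric_space (mm_carrier X) (mm_dist X)"
    and space_mm_meas: "space (mm_meas X) = mm_carrier X"
proof -
  show "prob_space (mm_meas X)" "Metric_space (mm_carrier X) (mm_dist X)"
    using assms unfolding mm_space_def by simp_all
  then show "space (mm_meas X) = mm_carrier X"
    using assms sets_eq_imp_space_eq[of "mm_meas X"] space_metric_borel
    unfolding mm_space_def by simp
qed

lemma mm_space_openin_sets:
  assumes "mm_space X" "openin (Metric_space.mtopology (mm_carrier X) (mm_dist X)) U"
  shows "U \<in> sets (mm_meas X)"
proof -
  have "U \<in> sigma_sets (mm_carrier X) {U. openin (Metric_space.mtopology (mm_carrier X) (mm_dist X)) U}"
    using assms(2) by (rule sigma_sets.Basic[OF CollectI])
  then show ?thesis
    using assms(1) sets_metric_borel[OF mm_space_Metric_space[OF assms(1)]]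
    unfolding mm_space_def by simp
qed

lemma mm_lipschitz_borel_measurable:
  assumes X: "mm_space X" and lip: "mm_lipschitz X h"
  shows "h \<in> borel_measurable (mm_meas X)"
proof -
  interpret Metric_space "mm_carrier X" "mm_dist X" using mm_space_Metric_space[OF X] .
  have "openin mtopology {w \<in> mm_carrier X. h w < a}" for a
    unfolding openin_mtopology
  proof (intro conjI allI impI)
    fix x assume x: "x \<in> {w \<in> mm_carrier X. h w < a}"
    have "mball x (a - h x) \<subseteq> {w \<in> mm_carrier X. h w < a}"
    proof
      fix y assume "y \<in> mball x (a - h x)"
      then have "y \<in> mm_carrier X" "mm_dist X x y < a - h x" "\<bar>h x - h y\<bar> \<le> mm_dist X x y"
        using lip by auto
      then show "y \<in> {w \<in> mm_carrier X. h w < a}" by auto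
    qed
    then show "\<exists>r>0. mball x r \<subseteq> {w \<in> mm_carrier X. h w < a}"
      using x by (intro exI[of _ "a - h x"]) auto
  qed auto
  then show ?thesis
    using mm_space_openin_sets[OF X] space_mm_meas[OF X] by (simp add: borel_measurable_iff_less)
qed

lemma mm_lipschitz_level_sets:
  assumes X: "mm_space X" and lip: "mm_lipschitz X h"
  shows "{y \<in> mm_carrier X. h y \<le> r} \<in> sets (mm_meas X)"
    and "{y \<in> mm_carrier X. r \<le> h y} \<in> sets (mm_meas X)"
  using measurable_sets[OF mm_lipschitz_borel_measurable[OF assms], of "{..r}"]
    measurable_sets[OF mm_lipschitz_borel_measurable[OF assms], of "{r..}"]
  by (simp_all add: space_mm_meas[OF X] vimage_def Int_def conj_commute)

lemma mm_lipschitz_dist: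
  assumes "mm_space X" "x \<in> mm_carrier X"
  shows "mm_lipschitz X (mm_dist X x)"
proof -
  interpret Metric_space "mm_carrier X" "mm_dist X" using mm_space_Metric_space[OF assms(1)] .
  have "\<bar>mm_dist X x y - mm_dist X x y'\<bar> \<le> mm_dist X y y'"
    if "y \<in> mm_carrier X" "y' \<in> mm_carrier X" for y y'
    using assms(2) that triangle[of x y y'] triangle[of x y' y] commute[of y y'] by linarith
  then show ?thesis by blast
qed

lemma mm_space_singleton_sets:
  assumes X: "mm_space X" and x: "x \<in> mm_carrier X"
  shows "{x} \<in> sets (mm_meas X)"
proof -
  interpret Metric_space "mm_carrier X" "mm_dist X" using mm_space_Metric_space[OF X] .
  have "{y \<in> mm_carrier X. mm_dist X x y \<le> 0} = {x}"
  proof (intro equalityI subsetI)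
    fix y assume "y \<in> {y \<in> mm_carrier X. mm_dist X x y \<le> 0}"
    then have "y \<in> mm_carrier X" "mm_dist X x y = 0" using nonneg[of x y] by auto
    then show "y \<in> {x}" using zero[OF x] by auto
  qed (use x in auto)
  with mm_lipschitz_level_sets(1)[OF X mm_lipschitz_dist[OF X x], of 0] show ?thesis by metis
qed

lemma Metric_space_scale:
  assumes "Metric_space C d" "0 < t"
  shows "Metric_space C (\<lambda>x y. t * d x y)"
proof -
  interpret Metric_space C d by fact
  show ?thesis
  proof
    show "0 \<le> t * d x y" for x y using assms(2) by simp
    show "t * d x y = t * d y x" for x y using commute[of x y] by simp
    show "t * d x y = 0 \<longleftrightarrow> x = y" if "x \<in> C" "y \<in> C" for x y
      using assms(2) zero[OF that] by simp
    show "t * d x z \<le> t * d x y + t * d y z" if "x \<in> C" "y \<in> C" "z \<in> C" for x y z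
      using assms(2) triangle[OF that] by (simp add: distrib_left[symmetric])
  qed
qed

lemma (in prob_space) prob_Int_ge:
  assumes "A \<in> events" "B \<in> events"
  shows "prob A + prob B - 1 \<le> prob (A \<inter> B)"
proof -
  have "prob (A \<union> B) = prob A + prob B - prob (A \<inter> B)"
    using assms by (intro measure_Un3) (auto simp: fmeasurable_eq_sets)
  then show ?thesis using prob_le_1[of "A \<union> B"] by simp
qed

section \<open>Dirac mm-spaces\<close>

lemma mm_star_simps:
  "mm_carrier mm_star = {0}" "mm_dist mm_star = (\<lambda>x y. 0)"
  "mm_meas mm_star = return (metric_borel {0} (\<lambda>x y. 0)) 0"
  by (simp_all add: mm_star_def)

lemma space_metric_borel_singleton: "space (metric_borel {0::real} (\<lambda>x y. 0)) = {0}"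
proof (rule space_metric_borel)
  show "Metric_space {0::real} (\<lambda>x y. 0)" by unfold_locales auto
qed

lemma (in prob_space) eq_return_if_AE_eq:
  assumes x: "x \<in> space M" and ae: "AE y in M. y = x"
  shows "M = return M x"
proof (rule measure_eqI)
  fix A assume A: "A \<in> sets M"
  show "emeasure M A = emeasure (return M x) A"
  proof (cases "x \<in> A")
    case True
    then have "AE y in M. y \<in> A" using ae by auto
    then have "prob A = 1" using AE_in_set_eq_1[OF A] by simp
    then show ?thesis using True A by (simp add: emeasure_eq_measure)
  next
    case False
    then have "AE y in M. y \<notin> A" using ae by auto
    then have "prob A = 0" using prob_eq_0[OF A] by simp
    then show ?thesis using False A by (simp add: emeasure_eq_measure)
  qed
qed simp

lemma pyr_star_if_AE_eq:
  assumes X: "mm_space X" and x: "x \<in> mm_carrier X" and ae: "AE y in mm_meas X. y = x"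
  shows "X \<in> pyr_star"
proof -
  interpret prob_space "mm_meas X" using mm_space_prob_space[OF X] .
  have xs: "x \<in> space (mm_meas X)" using x space_mm_meas[OF X] by simp
  have "distr (mm_meas mm_star) (mm_meas X) (\<lambda>_. x) = return (mm_meas X) x"
    unfolding mm_star_simps
    by (rule distr_return[OF measurable_const[OF xs]]) (simp add: space_metric_borel_singleton)
  also have "\<dots> = mm_meas X" using eq_return_if_AE_eq[OF xs ae] by simp
  finally have "mm_dominated X mm_star"
    unfolding mm_dominated_def mm_star_simps
    using x measurable_const[OF xs, of "metric_borel {0} (\<lambda>x y. 0)"]
      Metric_space.zero[OF mm_space_Metric_space[OF X] x x]
    by (intro exI[of _ "\<lambda>_. x"]) simp
  then show ?thesis using X unfolding pyr_star_def by simp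
qed

lemma pyr_star_imp_return:
  assumes "X \<in> pyr_star"
  obtains x where "x \<in> mm_carrier X" "mm_meas X = return (mm_meas X) x"
proof -
  obtain f where f: "f \<in> mm_carrier mm_star \<rightarrow> mm_carrier X"
    "f \<in> measurable (mm_meas mm_star) (mm_meas X)"
    "distr (mm_meas mm_star) (mm_meas X) f = mm_meas X"
    using assms unfolding pyr_star_def mm_dominated_def by blast
  have "distr (mm_meas mm_star) (mm_meas X) f = return (mm_meas X) (f 0)"
    using f(2) unfolding mm_star_simps
    by (intro distr_return) (simp_all add: space_metric_borel_singleton)
  moreover have "f 0 \<in> mm_carrier X" using f(1) by (auto simp: mm_star_simps)
  ultimately show ?thesis using f(3) that by metis
qed

lemma mm_space_AE_near_point:
  assumes X: "mm_space X" and e: "0 < e"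
    and null_ball_or_tail: "\<And>x. x \<in> mm_carrier X \<Longrightarrow>
       measure (mm_meas X) {y \<in> mm_carrier X. mm_dist X x y \<le> e} = 0 \<or>
       measure (mm_meas X) {y \<in> mm_carrier X. 2 * e \<le> mm_dist X x y} = 0"
  shows "\<exists>q\<in>mm_carrier X. AE y in mm_meas X. mm_dist X q y < 2 * e"
proof -
  interpret prob_space "mm_meas X" using mm_space_prob_space[OF X] .
  interpret Metric_space "mm_carrier X" "mm_dist X" using mm_space_Metric_space[OF X] .
  have ball: "{y \<in> mm_carrier X. mm_dist X q y \<le> e} \<in> events"
    and far: "{y \<in> mm_carrier X. 2 * e \<le> mm_dist X q y} \<in> events" if "q \<in> mm_carrier X" for q
    using mm_lipschitz_level_sets[OF X mm_lipschitz_dist[OF X that]] by auto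
  obtain D where D: "countable D" "D \<subseteq> mm_carrier X" "mtopology closure_of D = mm_carrier X"
    using X unfolding mm_space_def separable_space_def topspace_mtopology by blast
  have "\<exists>q\<in>D. measure (mm_meas X) {y \<in> mm_carrier X. mm_dist X q y \<le> e} \<noteq> 0"
  proof (rule ccontr)
    assume "\<not> ?thesis"
    then have "AE y in mm_meas X. y \<notin> {y \<in> mm_carrier X. mm_dist X q y \<le> e}" if "q \<in> D" for q
      using that ball D(2) prob_eq_0 by blast
    then have "\<forall>q\<in>D. AE y in mm_meas X. y \<notin> {y \<in> mm_carrier X. mm_dist X q y \<le> e}"
      by blast
    then have "AE y in mm_meas X. \<forall>q\<in>D. y \<notin> {y \<in> mm_carrier X. mm_dist X q y \<le> e}"
      by (rule AE_ball_countable[OF D(1), THEN iffD2])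
    then have "AE y in mm_meas X. False"
      using AE_space
    proof eventually_elim
      case (elim y)
      then have y: "y \<in> mm_carrier X" using space_mm_meas[OF X] by simp
      then have "y \<in> mtopology closure_of D" using D(3) by simp
      then obtain q where "q \<in> D" "q \<in> mball y e" using e unfolding metric_closure_of by blast
      then show False using elim y commute[of y q] by auto
    qed
    then show False by simp
  qed
  then obtain q where q: "q \<in> mm_carrier X"
    "measure (mm_meas X) {y \<in> mm_carrier X. 2 * e \<le> mm_dist X q y} = 0"
    using null_ball_or_tail D(2) by blast
  then have "AE y in mm_meas X. y \<notin> {y \<in> mm_carrier X. 2 * e \<le> mm_dist X q y}"
    using far by (simp add: prob_eq_0)
  then have "AE y in mm_meas X. mm_dist X q y < 2 * e"
    using AE_space by eventually_elim (auto simp: space_mm_meas[OF X])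
  then show ?thesis using q(1) by blast
qed

lemma mm_space_AE_eq_point:
  assumes X: "mm_space X"
    and near: "\<And>e. 0 < e \<Longrightarrow> \<exists>q\<in>mm_carrier X. AE y in mm_meas X. mm_dist X q y < e"
  shows "\<exists>x\<in>mm_carrier X. AE y in mm_meas X. y = x"
proof -
  interpret prob_space "mm_meas X" using mm_space_prob_space[OF X] .
  interpret Metric_space "mm_carrier X" "mm_dist X" using mm_space_Metric_space[OF X] .
  obtain q where q: "\<And>n. q n \<in> mm_carrier X"
    "\<And>n. AE y in mm_meas X. mm_dist X (q n) y < inverse (Suc n)"
  proof -
    have "\<exists>q\<in>mm_carrier X. AE y in mm_meas X. mm_dist X q y < inverse (Suc n)" for n
      by (rule near) simp
    then show ?thesis using that by metis
  qed
  have "AE y in mm_meas X. \<forall>n. mm_dist X (q n) y < inverse (Suc n)"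
    using q(2) by (simp add: AE_all_countable)
  then have ae: "AE y in mm_meas X. y \<in> mm_carrier X \<and> (\<forall>n. mm_dist X (q n) y < inverse (Suc n))"
    using AE_space by eventually_elim (simp add: space_mm_meas[OF X])
  have "\<exists>x. x \<in> mm_carrier X \<and> (\<forall>n. mm_dist X (q n) x < inverse (Suc n))"
  proof (rule ccontr)
    assume none: "\<not> ?thesis"
    from ae have "AE y in mm_meas X. False" by eventually_elim (use none in blast)
    then show False by simp
  qed
  then obtain x where x: "x \<in> mm_carrier X" "\<And>n. mm_dist X (q n) x < inverse (Suc n)"
    by blast
  have "AE y in mm_meas X. y = x"
    using ae
  proof eventually_elim
    case (elim y)
    have "mm_dist X x y \<le> 0 + \<epsilon>" if "0 < \<epsilon>" for \<epsilon>
    proof -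
      have "0 < \<epsilon> / 2" using that by simp
      then obtain n where n: "inverse (Suc n) < \<epsilon> / 2" using reals_Archimedean by blast
      have "mm_dist X x y \<le> mm_dist X (q n) x + mm_dist X (q n) y"
        using triangle[OF x(1) q(1) _] commute elim by (metis)
      also have "\<dots> < \<epsilon>" using x(2)[of n] elim n by (smt (verit) field_sum_of_halves)
      finally show ?thesis by simp
    qed
    then have "mm_dist X x y = 0" using field_le_epsilon nonneg by (metis antisym)
    then show "y = x" using x(1) elim by simp
  qed
  then show ?thesis using x(1) by blast
qed

lemma not_pyr_star_imp_separated_masses:
  assumes X: "mm_space X" and notin: "X \<notin> pyr_star"
  obtains x r where "x \<in> mm_carrier X" "0 < r"
    "0 < measure (mm_meas X) {y \<in> mm_carrier X. mm_dist X x y \<le> r}"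
    "0 < measure (mm_meas X) {y \<in> mm_carrier X. 2 * r \<le> mm_dist X x y}"
proof -
  have "\<exists>x\<in>mm_carrier X. \<exists>r>0.
      0 < measure (mm_meas X) {y \<in> mm_carrier X. mm_dist X x y \<le> r} \<and>
      0 < measure (mm_meas X) {y \<in> mm_carrier X. 2 * r \<le> mm_dist X x y}"
  proof (rule ccontr)
    assume no_separation: "\<not> ?thesis"
    have null_ball_or_tail: "measure (mm_meas X) {y \<in> mm_carrier X. mm_dist X x y \<le> r} = 0 \<or>
        measure (mm_meas X) {y \<in> mm_carrier X. 2 * r \<le> mm_dist X x y} = 0"
      if "x \<in> mm_carrier X" "0 < r" for x r
    proof (rule ccontr)
      assume "\<not> ?thesis"
      then have "0 < measure (mm_meas X) {y \<in> mm_carrier X. mm_dist X x y \<le> r}"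
        "0 < measure (mm_meas X) {y \<in> mm_carrier X. 2 * r \<le> mm_dist X x y}"
        by (simp_all add: less_le)
      then show False using no_separation that by blast
    qed
    then have "\<exists>q\<in>mm_carrier X. AE y in mm_meas X. mm_dist X q y < e" if "0 < e" for e
    proof -
      have "0 < e / 2" using that by simp
      then have "\<exists>q\<in>mm_carrier X. AE y in mm_meas X. mm_dist X q y < 2 * (e / 2)"
        using null_ball_or_tail by (intro mm_space_AE_near_point[OF X]) blast+
      then show ?thesis by simp
    qed
    then obtain x where "x \<in> mm_carrier X" "AE y in mm_meas X. y = x"
      using mm_space_AE_eq_point[OF X] by blast
    then show False using pyr_star_if_AE_eq[OF X] notin by blast
  qed
  then show ?thesis using that by blast
qed

section \<open>Observable diameter under box approximation\<close>

lemma box_dist_lessE: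
  assumes "box_dist X Y < ereal eps"
  obtains \<pi> S where "\<pi> \<in> couplings (mm_meas X) (mm_meas Y)"
    "S \<in> sets (mm_meas X \<Otimes>\<^sub>M mm_meas Y)" "1 - measure \<pi> S < eps"
    "\<And>p q. p \<in> S \<Longrightarrow> q \<in> S \<Longrightarrow>
       \<bar>mm_dist X (fst p) (fst q) - mm_dist Y (snd p) (snd q)\<bar> < eps"
proof -
  obtain \<pi> S where \<pi>: "\<pi> \<in> couplings (mm_meas X) (mm_meas Y)"
    and S: "S \<in> sets (mm_meas X \<Otimes>\<^sub>M mm_meas Y)"
    and less: "max (distortion X Y S) (ereal (1 - measure \<pi> S)) < ereal eps"
    using assms unfolding box_dist_def INF_less_iff by blast
  have "ereal \<bar>mm_dist X (fst p) (fst q) - mm_dist Y (snd p) (snd q)\<bar> < ereal eps"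
    if "p \<in> S" "q \<in> S" for p q
  proof -
    have "ereal \<bar>mm_dist X (fst p) (fst q) - mm_dist Y (snd p) (snd q)\<bar> \<le> distortion X Y S"
      unfolding distortion_def by (rule SUP_upper2[OF that(1)], rule SUP_upper2[OF that(2)]) simp
    also have "\<dots> < ereal eps" using less by simp
    finally show ?thesis .
  qed
  then show ?thesis using that[OF \<pi> S] less by simp
qed

lemma couplings_marginals:
  assumes \<pi>: "\<pi> \<in> couplings \<mu> \<nu>"
  shows "space \<pi> = space \<mu> \<times> space \<nu>"
    and "A \<in> sets \<mu> \<Longrightarrow> measure \<pi> (A \<times> space \<nu>) = measure \<mu> A"
    and "B \<in> sets \<nu> \<Longrightarrow> measure \<pi> (space \<mu> \<times> B) = measure \<nu> B"
proof -
  have s: "sets \<pi> = sets (\<mu> \<Otimes>\<^sub>M \<nu>)" and m1: "distr \<pi> \<mu> fst = \<mu>" and m2: "distr \<pi> \<nu> snd = \<nu>"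
    using \<pi> unfolding couplings_def by auto
  show sp: "space \<pi> = space \<mu> \<times> space \<nu>"
    using sets_eq_imp_space_eq[OF s] by (simp add: space_pair_measure)
  have fst: "fst \<in> measurable \<pi> \<mu>" and snd: "snd \<in> measurable \<pi> \<nu>"
    using measurable_cong_sets[OF s refl] by auto
  show "measure \<pi> (A \<times> space \<nu>) = measure \<mu> A" if A: "A \<in> sets \<mu>"
  proof -
    have "fst -` A \<inter> space \<pi> = A \<times> space \<nu>" using sp sets.sets_into_space[OF A] by auto
    then show ?thesis using m1 measure_distr[OF fst A] by simp
  qed
  show "measure \<pi> (space \<mu> \<times> B) = measure \<nu> B" if B: "B \<in> sets \<nu>"
  proof -
    have "snd -` B \<inter> space \<pi> = space \<mu> \<times> B" using sp sets.sets_into_space[OF B] by auto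
    then show ?thesis using m2 measure_distr[OF snd B] by simp
  qed
qed

lemma couplings_transfer_mass:
  assumes \<pi>: "\<pi> \<in> couplings \<mu> \<nu>" and S: "S \<in> sets \<pi>"
    and A: "A \<in> sets \<mu>" and B: "B \<in> sets \<nu>"
    and AB: "\<And>x y. (x, y) \<in> S \<Longrightarrow> x \<in> A \<Longrightarrow> y \<in> B"
  shows "measure \<mu> A - (1 - measure \<pi> S) \<le> measure \<nu> B"
proof -
  interpret prob_space \<pi> using \<pi> unfolding couplings_def by auto
  have sets_\<pi>: "sets \<pi> = sets (\<mu> \<Otimes>\<^sub>M \<nu>)" using \<pi> unfolding couplings_def by auto
  have A_cyl: "A \<times> space \<nu> \<in> events" and B_cyl: "space \<mu> \<times> B \<in> events"
    using A B unfolding sets_\<pi> by (auto intro: pair_measureI)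
  have "measure \<mu> A - (1 - prob S) = prob S + prob (A \<times> space \<nu>) - 1"
    using couplings_marginals(2)[OF \<pi> A] by simp
  also have "\<dots> \<le> prob (S \<inter> (A \<times> space \<nu>))" by (rule prob_Int_ge[OF S A_cyl])
  also have "\<dots> \<le> prob (space \<mu> \<times> B)"
  proof (rule finite_measure_mono[OF _ B_cyl])
    show "S \<inter> (A \<times> space \<nu>) \<subseteq> space \<mu> \<times> B"
      using sets.sets_into_space[OF S] AB couplings_marginals(1)[OF \<pi>] by auto
  qed
  also have "\<dots> = measure \<nu> B" using couplings_marginals(3)[OF \<pi> B] .
  finally show ?thesis .
qed

lemma almost_lipschitz_extension:
  fixes u :: "'a \<times> 'b \<Rightarrow> real"
  assumes "Metric_space C d" and S: "snd ` S \<subseteq> C" "S \<noteq> {}"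
    and u_nonneg: "\<And>p. p \<in> S \<Longrightarrow> 0 \<le> u p"
    and u_almost_lip: "\<And>p q. p \<in> S \<Longrightarrow> q \<in> S \<Longrightarrow> u p < u q + d (snd q) (snd p) + eps"
  obtains h where "\<And>y y'. y \<in> C \<Longrightarrow> y' \<in> C \<Longrightarrow> \<bar>h y - h y'\<bar> \<le> d y y'"
    "\<And>p. p \<in> S \<Longrightarrow> h (snd p) \<le> u p" "\<And>p. p \<in> S \<Longrightarrow> u p - eps \<le> h (snd p)"
proof -
  interpret Metric_space C d by fact
  define h where "h y = (INF q\<in>S. u q + d (snd q) y)" for y
  have bdd: "bdd_below ((\<lambda>q. u q + d (snd q) y) ` S)" for y
    using u_nonneg by (intro bdd_belowI2[of _ 0]) (simp add: add_nonneg_nonneg)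
  have h_le: "h y \<le> u q + d (snd q) y" if "q \<in> S" for q y
    unfolding h_def by (rule cINF_lower[OF bdd that])
  have "h y \<le> h y' + d y' y" if "y \<in> C" "y' \<in> C" for y y'
  proof -
    have "h y - d y' y \<le> u q + d (snd q) y'" if "q \<in> S" for q
    proof -
      have "d (snd q) y \<le> d (snd q) y' + d y' y"
        using triangle \<open>y \<in> C\<close> \<open>y' \<in> C\<close> that S(1) by blast
      then show ?thesis using h_le[OF that, of y] by linarith
    qed
    then have "h y - d y' y \<le> h y'" unfolding h_def using S(2) by (intro cINF_greatest) auto
    then show ?thesis by simp
  qed
  then have "\<bar>h y - h y'\<bar> \<le> d y y'" if "y \<in> C" "y' \<in> C" for y y'
    using that commute[of y y'] by (force simp: abs_le_iff)
  moreover have "h (snd p) \<le> u p" if "p \<in> S" for p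
  proof -
    have "snd p \<in> C" using that S(1) by blast
    then show ?thesis using h_le[OF that, of "snd p"] by simp
  qed
  moreover have "u p - eps \<le> h (snd p)" if "p \<in> S" for p
    unfolding h_def
  proof (rule cINF_greatest)
    show "S \<noteq> {}" by (rule S(2))
  next
    fix q assume "q \<in> S"
    then show "u p - eps \<le> u q + d (snd q) (snd p)" using u_almost_lip[OF that] by fastforce
  qed
  ultimately show ?thesis using that by blast
qed

lemma obs_diam_ge_if_separated_masses:
  assumes Y: "mm_space Y" and g: "mm_lipschitz Y g"
    and low: "kap < measure (mm_meas Y) {y \<in> mm_carrier Y. g y \<le> a}"
    and high: "kap < measure (mm_meas Y) {y \<in> mm_carrier Y. b \<le> g y}"
  shows "ereal (b - a) \<le> obs_diam Y kap"
proof -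
  interpret prob_space "mm_meas Y" using mm_space_prob_space[OF Y] .
  have g_meas: "g \<in> borel_measurable (mm_meas Y)" by (rule mm_lipschitz_borel_measurable[OF Y g])
  note level_sets = mm_lipschitz_level_sets[OF Y g]
  have "ereal (b - a) \<le> partial_diam (distr (mm_meas Y) borel g) kap"
    unfolding partial_diam_def
  proof (rule INF_greatest)
    fix A assume "A \<in> {A \<in> sets borel. 1 - kap \<le> measure (distr (mm_meas Y) borel g) A}"
    then have A: "A \<in> sets borel" "1 - kap \<le> prob (g -` A \<inter> space (mm_meas Y))"
      by (auto simp: measure_distr[OF g_meas])
    have preA: "g -` A \<inter> space (mm_meas Y) \<in> events" using measurable_sets[OF g_meas A(1)] .
    have meets: "\<exists>y\<in>E. g y \<in> A" if E: "E \<in> events" "kap < prob E" for E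
    proof -
      have "0 < prob ((g -` A \<inter> space (mm_meas Y)) \<inter> E)"
        using prob_Int_ge[OF preA E(1)] A(2) E(2) by linarith
      then have "(g -` A \<inter> space (mm_meas Y)) \<inter> E \<noteq> {}" by auto
      then show ?thesis by blast
    qed
    obtain y1 where "g y1 \<in> A" "g y1 \<le> a" using meets[OF level_sets(1) low] by blast
    moreover obtain y2 where "g y2 \<in> A" "b \<le> g y2" using meets[OF level_sets(2) high] by blast
    ultimately have "ereal (b - a) \<le> ereal \<bar>g y2 - g y1\<bar>" by simp
    then show "ereal (b - a) \<le> (SUP x\<in>A. SUP y\<in>A. ereal \<bar>x - y\<bar>)"
      by (intro SUP_upper2[OF \<open>g y2 \<in> A\<close>] SUP_upper2[OF \<open>g y1 \<in> A\<close>])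
  qed
  also have "\<dots> \<le> obs_diam Y kap"
    unfolding obs_diam_def using g by (intro SUP_upper2[of g]) auto
  finally show ?thesis .
qed

lemma box_dist_scale_less_imp_transfer:
  assumes X: "mm_space X" and Y: "mm_space Y" and t: "0 < t" and x: "x \<in> mm_carrier X"
    and box: "box_dist X (mm_scale t Y) < ereal eps" and eps: "eps < 1"
  obtains \<pi> S g where "\<pi> \<in> couplings (mm_meas X) (mm_meas Y)" "S \<in> sets \<pi>"
    "S \<subseteq> mm_carrier X \<times> mm_carrier Y" "1 - measure \<pi> S < eps" "mm_lipschitz Y g"
    "\<And>z y. (z, y) \<in> S \<Longrightarrow> t * g y \<le> mm_dist X x z"
    "\<And>z y. (z, y) \<in> S \<Longrightarrow> mm_dist X x z - eps \<le> t * g y"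
proof -
  interpret DX: Metric_space "mm_carrier X" "mm_dist X" using mm_space_Metric_space[OF X] .
  obtain \<pi> S where \<pi>: "\<pi> \<in> couplings (mm_meas X) (mm_meas Y)"
    and S: "S \<in> sets (mm_meas X \<Otimes>\<^sub>M mm_meas Y)" and mass: "1 - measure \<pi> S < eps"
    and dis: "\<And>p q. p \<in> S \<Longrightarrow> q \<in> S \<Longrightarrow>
      \<bar>mm_dist X (fst p) (fst q) - t * mm_dist Y (snd p) (snd q)\<bar> < eps"
    using box_dist_lessE[OF box, unfolded mm_scale_simps] by blast
  have S_\<pi>: "S \<in> sets \<pi>" using \<pi> S unfolding couplings_def by auto
  have S_sub: "S \<subseteq> mm_carrier X \<times> mm_carrier Y"
    using sets.sets_into_space[OF S_\<pi>] couplings_marginals(1)[OF \<pi>]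
    by (simp add: space_mm_meas[OF X] space_mm_meas[OF Y])
  have "S \<noteq> {}" using mass eps by auto
  have almost_lip: "mm_dist X x (fst p) < mm_dist X x (fst q) + t * mm_dist Y (snd q) (snd p) + eps"
    if "p \<in> S" "q \<in> S" for p q
  proof -
    have "mm_dist X x (fst p) \<le> mm_dist X x (fst q) + mm_dist X (fst q) (fst p)"
      using that S_sub by (intro DX.triangle[OF x]) auto
    then show ?thesis using dis[OF that(2,1)] by linarith
  qed
  obtain h where h_lip: "\<And>y y'. y \<in> mm_carrier Y \<Longrightarrow> y' \<in> mm_carrier Y \<Longrightarrow>
      \<bar>h y - h y'\<bar> \<le> t * mm_dist Y y y'"
    and h_le: "\<And>p. p \<in> S \<Longrightarrow> h (snd p) \<le> mm_dist X x (fst p)"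
    and h_ge: "\<And>p. p \<in> S \<Longrightarrow> mm_dist X x (fst p) - eps \<le> h (snd p)"
  proof (rule almost_lipschitz_extension[OF Metric_space_scale[OF mm_space_Metric_space[OF Y] t]
        _ \<open>S \<noteq> {}\<close> _ almost_lip])
    show "snd ` S \<subseteq> mm_carrier Y" using S_sub by auto
  qed auto
  have "mm_lipschitz Y (\<lambda>y. h y / t)"
  proof (intro ballI)
    fix y y' assume "y \<in> mm_carrier Y" "y' \<in> mm_carrier Y"
    then have "\<bar>h y - h y'\<bar> / t \<le> mm_dist Y y y'"
      using h_lip t by (simp add: pos_divide_le_eq mult.commute)
    then show "\<bar>h y / t - h y' / t\<bar> \<le> mm_dist Y y y'"
      using t by (simp add: abs_div diff_divide_distrib[symmetric])
  qed
  moreover have "t * (h y / t) = h y" for y using t by simp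
  ultimately show ?thesis
    using that[OF \<pi> S_\<pi> S_sub mass] h_le h_ge by fastforce
qed

lemma obs_diam_ge_if_box_dist_scale_less:
  assumes X: "mm_space X" and Y: "mm_space Y" and t: "0 < t" and x: "x \<in> mm_carrier X"
    and near: "c \<le> measure (mm_meas X) {z \<in> mm_carrier X. mm_dist X x z \<le> r1}"
    and far: "c \<le> measure (mm_meas X) {z \<in> mm_carrier X. r2 \<le> mm_dist X x z}"
    and kap: "0 \<le> kap" "kap < c - eps"
    and box: "box_dist X (mm_scale t Y) < ereal eps"
  shows "ereal ((r2 - r1 - eps) / t) \<le> obs_diam Y kap"
proof -
  have "c \<le> 1"
    using near prob_space.prob_le_1[OF mm_space_prob_space[OF X]] by (meson order_trans)
  then obtain \<pi> S g where \<pi>: "\<pi> \<in> couplings (mm_meas X) (mm_meas Y)" and S: "S \<in> sets \<pi>"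
    and S_sub: "S \<subseteq> mm_carrier X \<times> mm_carrier Y" and mass: "1 - measure \<pi> S < eps"
    and g: "mm_lipschitz Y g"
    and g_le: "\<And>z y. (z, y) \<in> S \<Longrightarrow> t * g y \<le> mm_dist X x z"
    and g_ge: "\<And>z y. (z, y) \<in> S \<Longrightarrow> mm_dist X x z - eps \<le> t * g y"
    using box_dist_scale_less_imp_transfer[OF X Y t x box] kap by auto
  note X_sets = mm_lipschitz_level_sets[OF X mm_lipschitz_dist[OF X x]]
  note Y_sets = mm_lipschitz_level_sets[OF Y g]
  have "c - eps \<le> measure (mm_meas X) {z \<in> mm_carrier X. mm_dist X x z \<le> r1} - (1 - measure \<pi> S)"
    using near mass by simp
  also have "\<dots> \<le> measure (mm_meas Y) {y \<in> mm_carrier Y. g y \<le> r1 / t}"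
  proof (rule couplings_transfer_mass[OF \<pi> S X_sets(1) Y_sets(1)])
    fix z y assume "(z, y) \<in> S" "z \<in> {z \<in> mm_carrier X. mm_dist X x z \<le> r1}"
    then show "y \<in> {y \<in> mm_carrier Y. g y \<le> r1 / t}"
      using g_le[of z y] S_sub t by (auto simp: pos_le_divide_eq mult.commute)
  qed
  finally have low: "c - eps \<le> measure (mm_meas Y) {y \<in> mm_carrier Y. g y \<le> r1 / t}" .
  have "c - eps \<le> measure (mm_meas X) {z \<in> mm_carrier X. r2 \<le> mm_dist X x z} - (1 - measure \<pi> S)"
    using far mass by simp
  also have "\<dots> \<le> measure (mm_meas Y) {y \<in> mm_carrier Y. (r2 - eps) / t \<le> g y}"
  proof (rule couplings_transfer_mass[OF \<pi> S X_sets(2) Y_sets(2)])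
    fix z y assume "(z, y) \<in> S" "z \<in> {z \<in> mm_carrier X. r2 \<le> mm_dist X x z}"
    then show "y \<in> {y \<in> mm_carrier Y. (r2 - eps) / t \<le> g y}"
      using g_ge[of z y] S_sub t by (auto simp: pos_divide_le_eq mult.commute)
  qed
  finally have high: "c - eps \<le> measure (mm_meas Y) {y \<in> mm_carrier Y. (r2 - eps) / t \<le> g y}" .
  have "ereal ((r2 - eps) / t - r1 / t) \<le> obs_diam Y kap"
    using low high kap by (intro obs_diam_ge_if_separated_masses[OF Y g]) auto
  moreover have "(r2 - eps) / t - r1 / t = (r2 - r1 - eps) / t" by (simp add: diff_divide_distrib)
  ultimately show ?thesis by simp
qed

lemma box_dist_nonneg: "0 \<le> box_dist X Y"
  unfolding box_dist_def
proof (intro INF_greatest)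
  fix \<pi> S assume "\<pi> \<in> couplings (mm_meas X) (mm_meas Y)"
  then interpret prob_space \<pi> unfolding couplings_def by auto
  have "0 \<le> ereal (1 - measure \<pi> S)" using prob_le_1[of S] by simp
  then show "0 \<le> max (distortion X Y S) (ereal (1 - measure \<pi> S))" by (simp add: le_max_iff_disj)
qed

lemma box_dist_scale_return_le_0:
  assumes X: "mm_space X" "x \<in> mm_carrier X" "mm_meas X = return (mm_meas X) x"
    and Z: "mm_space Z" "z \<in> mm_carrier Z" "mm_meas Z = return (mm_meas Z) z"
  shows "box_dist X (mm_scale s Z) \<le> 0"
proof -
  define \<pi> where "\<pi> = return (mm_meas X \<Otimes>\<^sub>M mm_meas Z) (x, z)"
  have xz: "(x, z) \<in> space (mm_meas X \<Otimes>\<^sub>M mm_meas Z)"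
    using X Z by (simp add: space_pair_measure space_mm_meas)
  have "\<pi> \<in> couplings (mm_meas X) (mm_meas (mm_scale s Z))"
    unfolding couplings_def mm_scale_simps
  proof (intro CollectI conjI)
    show "sets \<pi> = sets (mm_meas X \<Otimes>\<^sub>M mm_meas Z)" unfolding \<pi>_def by simp
    show "prob_space \<pi>" unfolding \<pi>_def by (rule prob_space_return[OF xz])
    show "distr \<pi> (mm_meas X) fst = mm_meas X"
      using distr_return[OF measurable_fst xz] X(3) unfolding \<pi>_def by simp
    show "distr \<pi> (mm_meas Z) snd = mm_meas Z"
      using distr_return[OF measurable_snd xz] Z(3) unfolding \<pi>_def by simp
  qed
  moreover have S: "{(x, z)} \<in> sets (mm_meas X \<Otimes>\<^sub>M mm_meas (mm_scale s Z))"
    using pair_measureI[OF mm_space_singleton_sets[OF X(1,2)] mm_space_singleton_sets[OF Z(1,2)]]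
    by simp
  moreover have "distortion X (mm_scale s Z) {(x, z)} = 0"
    using Metric_space.zero[OF mm_space_Metric_space[OF X(1)] X(2) X(2)]
      Metric_space.zero[OF mm_space_Metric_space[OF Z(1)] Z(2) Z(2)]
    unfolding distortion_def by simp
  moreover have "measure \<pi> {(x, z)} = 1"
    using S unfolding \<pi>_def by (simp add: measure_return)
  ultimately show ?thesis
    unfolding box_dist_def by (intro INF_lower2[of \<pi>] INF_lower2[of "{(x, z)}"]) auto
qed

lemma pyramid_contains_return:
  assumes P: "pyramid P"
  obtains Z z where "Z \<in> P" "z \<in> mm_carrier Z" "mm_meas Z = return (mm_meas Z) z"
proof -
  obtain X where X: "X \<in> P" using P unfolding pyramid_def by auto
  have X_mm: "mm_space X" using X P unfolding pyramid_def by auto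
  interpret prob_space "mm_meas X" using mm_space_prob_space[OF X_mm] .
  obtain z where z: "z \<in> mm_carrier X" using not_empty space_mm_meas[OF X_mm] by auto
  have zs: "z \<in> space (mm_meas X)" using z space_mm_meas[OF X_mm] by simp
  define Z where "Z = (mm_carrier X, mm_dist X, return (mm_meas X) z)"
  have Z_mm: "mm_space Z" using X_mm prob_space_return[OF zs] unfolding Z_def mm_space_def by simp
  have "distr (mm_meas X) (return (mm_meas X) z) (\<lambda>_. z) = return (return (mm_meas X) z) z"
    by (rule distr_const) (simp add: zs)
  also have "\<dots> = return (mm_meas X) z" by (rule return_cong) simp
  finally have "mm_dominated Z X"
    unfolding mm_dominated_def Z_def mm_tuple using z zs Metric_space.nonneg[OF mm_space_Metric_space[OF X_mm]]
      Metric_space.zero[OF mm_space_Metric_space[OF X_mm] z z]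
    by (intro exI[of _ "\<lambda>_. z"]) simp
  then have "Z \<in> P" using P X Z_mm unfolding pyramid_def by blast
  moreover have "z \<in> mm_carrier Z" using z unfolding Z_def by simp
  moreover have "mm_meas Z = return (mm_meas Z) z"
    unfolding Z_def by (simp add: return_cong[of "return (mm_meas X) z" "mm_meas X" z])
  ultimately show ?thesis using that by blast
qed

lemma INF_box_dist_pyr_scale_eq_0:
  assumes P: "pyramid P" and X: "X \<in> pyr_star"
  shows "(INF Y\<in>pyr_scale t P. box_dist X Y) = 0"
proof (rule antisym)
  obtain Z z where Z: "Z \<in> P" "z \<in> mm_carrier Z" "mm_meas Z = return (mm_meas Z) z"
    using pyramid_contains_return[OF P] .
  obtain x where x: "x \<in> mm_carrier X" "mm_meas X = return (mm_meas X) x"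
    using pyr_star_imp_return[OF X] .
  have "mm_space X" "mm_space Z" using X Z(1) P unfolding pyr_star_def pyramid_def by auto
  then have "box_dist X (mm_scale t Z) \<le> 0" using box_dist_scale_return_le_0 x Z(2,3) by blast
  then show "(INF Y\<in>pyr_scale t P. box_dist X Y) \<le> 0"
    using Z(1) unfolding pyr_scale_def by (meson INF_lower2 imageI)
qed (intro INF_greatest box_dist_nonneg)

lemma liminf_INF_box_dist_pyr_scale_pos:
  assumes P: "pyramid P" and fin: "obs_diam_finite P"
    and t: "\<And>k. 0 < t k" "t \<longlonglongrightarrow> 0"
    and X: "mm_space X" "X \<notin> pyr_star"
  shows "0 < liminf (\<lambda>k. INF Y\<in>pyr_scale (t k) P. box_dist X Y)"
proof -
  obtain x r where x: "x \<in> mm_carrier X" and r: "0 < r"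
    and masses: "0 < measure (mm_meas X) {y \<in> mm_carrier X. mm_dist X x y \<le> r}"
      "0 < measure (mm_meas X) {y \<in> mm_carrier X. 2 * r \<le> mm_dist X x y}"
    using not_pyr_star_imp_separated_masses[OF X] .
  define c where "c = min (measure (mm_meas X) {y \<in> mm_carrier X. mm_dist X x y \<le> r})
    (measure (mm_meas X) {y \<in> mm_carrier X. 2 * r \<le> mm_dist X x y})"
  define eps where "eps = min (c / 2) (r / 2)"
  define kap where "kap = c / 4"
  have c: "0 < c" "c \<le> 1"
    using masses prob_space.prob_le_1[OF mm_space_prob_space[OF X(1)]] by (auto simp: c_def min_le_iff_disj)
  have eps: "0 < eps" "eps \<le> r / 2" using c r by (auto simp: eps_def)
  have kap: "0 < kap" "kap < 1" "kap < c - eps" using c by (auto simp: kap_def eps_def)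
  have "obs_diam_pyr P kap < \<infinity>" using fin kap(1,2) unfolding obs_diam_finite_def by blast
  then obtain n :: nat where n: "obs_diam_pyr P kap < ereal n" using less_PInf_Ex_of_nat by auto
  have bound: "ereal eps \<le> box_dist X (mm_scale s Y)" if s: "0 < s" "s < r / (2 * (n + 1))" and Y: "Y \<in> P" for s Y
  proof (rule ccontr)
    assume "\<not> ?thesis"
    then have box: "box_dist X (mm_scale s Y) < ereal eps" by simp
    have "mm_space Y" using Y P unfolding pyramid_def by auto
    then have "ereal ((2 * r - r - eps) / s) \<le> obs_diam Y kap"
      using kap by (intro obs_diam_ge_if_box_dist_scale_less[OF X(1) _ s(1) x _ _ _ _ box])
        (auto simp: c_def)
    also have "\<dots> \<le> obs_diam_pyr P kap" unfolding obs_diam_pyr_def using Y by (rule SUP_upper)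
    also have "\<dots> < ereal n" by (rule n)
    finally have "(r - eps) / s < n" by simp
    moreover have "n + 1 < (r / 2) / s" using s r by (simp add: field_simps)
    moreover have "(r / 2) / s \<le> (r - eps) / s" using s eps by (intro divide_right_mono) auto
    ultimately show False by linarith
  qed
  have "eventually (\<lambda>k. t k < r / (2 * (n + 1))) sequentially"
    using order_tendstoD(2)[OF t(2)] r by simp
  then have "eventually (\<lambda>k. ereal eps \<le> (INF Y\<in>pyr_scale (t k) P. box_dist X Y)) sequentially"
  proof (rule eventually_mono)
    fix k assume "t k < r / (2 * (n + 1))"
    then show "ereal eps \<le> (INF Y\<in>pyr_scale (t k) P. box_dist X Y)"
      unfolding pyr_scale_def using bound t(1) by (intro INF_greatest) blast
  qed
  then have "ereal eps \<le> liminf (\<lambda>k. INF Y\<in>pyr_scale (t k) P. box_dist X Y)"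
    by (rule Liminf_bounded)
  then show ?thesis using eps(1) by (meson ereal_less(2) less_le_trans)
qed

lemma pyr_weak_conv_pyr_star_if_obs_diam_finite:
  assumes "pyramid P" "obs_diam_finite P" "\<And>k. 0 < t k" "t \<longlonglongrightarrow> 0"
  shows "pyr_weak_conv (\<lambda>k. pyr_scale (t k) P) pyr_star"
  unfolding pyr_weak_conv_def
  using INF_box_dist_pyr_scale_eq_0 liminf_INF_box_dist_pyr_scale_pos assms by simp

section \<open>Two-point spaces\<close>

lemma mm_space_real_line:
  assumes "prob_space \<rho>" "sets \<rho> = sets (borel :: real measure)"
  shows "mm_space (UNIV, dist, \<rho>)"
proof -
  have "separable_space (euclidean :: real topology)"
    unfolding separable_space_def
    by (intro exI[of _ "\<rat>"]) (simp add: countable_rat Rats_closure_real euclidean_closure_of)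
  moreover have "metric_borel (UNIV :: real set) dist = borel"
    unfolding metric_borel_def by (simp add: borel_def)
  ultimately show ?thesis
    using assms Met_TC.Metric_space_axioms unfolding mm_space_def by (simp add: complete_UNIV)
qed

definition two_point_meas :: "real \<Rightarrow> real measure" where
  "two_point_meas p = point_measure {0, 1} (\<lambda>x. if x = 0 then ennreal p else ennreal (1 - p))"

definition two_point_space :: "real \<Rightarrow> mm" where
  "two_point_space p = ({0, 1}, dist, two_point_meas p)"

lemma sets_two_point_meas [simp]: "sets (two_point_meas p) = Pow {0, 1}"
  by (simp add: two_point_meas_def sets_point_measure)

lemma emeasure_two_point_meas:
  assumes "0 \<le> p" "p \<le> 1"
  shows "emeasure (two_point_meas p) {0} = p" "emeasure (two_point_meas p) {1} = 1 - p"
  using assms by (simp_all add: two_point_meas_def emeasure_point_measure_finite)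

lemma prob_space_two_point_meas:
  assumes "0 \<le> p" "p \<le> 1"
  shows "prob_space (two_point_meas p)"
  unfolding two_point_meas_def using assms
  by (intro prob_space_point_measure) (auto simp flip: ennreal_plus)

lemma mm_space_two_point_space:
  assumes "0 \<le> p" "p \<le> 1"
  shows "mm_space (two_point_space p)"
proof -
  interpret Metric_space "{0::real, 1}" dist by (rule Metric_space.subspace[OF Met_TC.Metric_space_axioms]) simp
  have discrete: "openin mtopology U" if "U \<subseteq> {0, 1}" for U
    unfolding openin_mtopology
  proof (intro conjI allI impI)
    fix x assume "x \<in> U"
    moreover have "mball x (1/2) \<subseteq> {x}" using \<open>x \<in> U\<close> that by (auto simp: dist_real_def)
    ultimately show "\<exists>r>0. mball x r \<subseteq> U" by (intro exI[of _ "1/2"]) auto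
  qed (use that in auto)
  have "sets (metric_borel {0::real, 1} dist) = Pow {0, 1}"
  proof
    show "sets (metric_borel {0::real, 1} dist) \<subseteq> Pow {0, 1}"
      using sets.sets_into_space space_metric_borel[OF Metric_space_axioms] by blast
    show "Pow {0::real, 1} \<subseteq> sets (metric_borel {0, 1} dist)"
      using discrete unfolding sets_metric_borel[OF Metric_space_axioms]
      by (auto intro: sigma_sets.Basic)
  qed
  moreover have "mcomplete"
    by (rule compact_space_imp_mcomplete) (simp add: compact_space_def finite_imp_compactin)
  moreover have "separable_space mtopology"
  proof -
    have "mtopology closure_of {0, 1} = {0::real, 1}" using closure_of_topspace[of mtopology] by simp
    then show ?thesis unfolding separable_space_def by (intro exI[of _ "{0, 1}"]) auto
  qed
  ultimately show ?thesis
    unfolding mm_space_def two_point_space_def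
    using Metric_space_axioms prob_space_two_point_meas[OF assms] by simp
qed

lemma two_point_space_notin_pyr_star:
  assumes "0 < p" "p < 1"
  shows "two_point_space p \<notin> pyr_star"
proof
  assume "two_point_space p \<in> pyr_star"
  then obtain x where "mm_meas (two_point_space p) = return (mm_meas (two_point_space p)) x"
    by (rule pyr_star_imp_return)
  then have e: "two_point_meas p = return (two_point_meas p) x" by (simp add: two_point_space_def)
  have "emeasure (two_point_meas p) {0} = indicator {0} x" by (subst e) simp
  then show False using emeasure_two_point_meas(1)[of p] assms by (cases "x = 0") auto
qed

definition unit_uniform :: "real measure" where
  "unit_uniform = uniform_measure lborel {0..1}"

lemma prob_space_unit_uniform: "prob_space unit_uniform"
  unfolding unit_uniform_def by (rule prob_space_uniform_measure) simp_all

lemma sets_unit_uniform [simp]: "sets unit_uniform = sets borel"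
  unfolding unit_uniform_def by simp

lemma space_unit_uniform [simp]: "space unit_uniform = UNIV"
  using sets_eq_imp_space_eq[OF sets_unit_uniform] by simp

lemma measure_unit_uniform:
  assumes "0 \<le> w" "w \<le> 1"
  shows "measure unit_uniform {..w} = w" and "measure unit_uniform {w<..} = 1 - w"
proof -
  have "{0..1} \<inter> {..w} = {0..w::real}" "{0..1} \<inter> {w<..} = {w<..1::real}" using assms by auto
  then show "measure unit_uniform {..w} = w" "measure unit_uniform {w<..} = 1 - w"
    unfolding unit_uniform_def measure_def using assms by (simp_all add: divide_ennreal_def)
qed

lemma measure_pair_measure_Times:
  assumes "prob_space M" "prob_space N" "A \<in> sets M" "B \<in> sets N"
  shows "measure (M \<Otimes>\<^sub>M N) (A \<times> B) = measure M A * measure N B"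
proof -
  interpret N: prob_space N by fact
  have "emeasure (M \<Otimes>\<^sub>M N) (A \<times> B) = emeasure M A * emeasure N B"
    using assms by (simp add: N.emeasure_pair_measure_Times)
  then show ?thesis unfolding measure_def by (simp add: enn2real_mult)
qed

lemma two_point_coupling:
  assumes \<Omega>: "prob_space \<Omega>" and Y: "Y \<in> measurable \<Omega> \<rho>" "distr \<Omega> \<rho> Y = \<rho>"
    and E: "E \<in> sets \<Omega>" "measure \<Omega> E = p"
  shows "(\<lambda>\<omega>. (if \<omega> \<in> E then 0 else 1, Y \<omega>)) \<in> measurable \<Omega> (two_point_meas p \<Otimes>\<^sub>M \<rho>)"
    and "distr \<Omega> (two_point_meas p \<Otimes>\<^sub>M \<rho>) (\<lambda>\<omega>. (if \<omega> \<in> E then 0 else 1, Y \<omega>))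
      \<in> couplings (two_point_meas p) \<rho>"
proof -
  interpret prob_space \<Omega> by fact
  define g where "g \<omega> = (if \<omega> \<in> E then 0 else 1 :: real)" for \<omega>
  have p: "0 \<le> p" "p \<le> 1" using E by auto
  have g_0: "g -` {0} \<inter> space \<Omega> = E" and g_1: "g -` {1} \<inter> space \<Omega> = space \<Omega> - E"
    using sets.sets_into_space[OF E(1)] by (auto simp: g_def split: if_splits)
  have g: "g \<in> measurable \<Omega> (two_point_meas p)"
  proof -
    have "g -` {v} \<inter> space \<Omega> \<in> sets \<Omega>" if "v \<in> {0, 1}" for v
      using that g_0 g_1 E(1) by auto
    then have "g \<in> measurable \<Omega> (count_space {0, 1})"
      by (subst measurable_count_space_eq2) (auto simp: g_def)
    moreover have "sets (two_point_meas p) = sets (count_space {0, 1})" by simp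
    ultimately show ?thesis using measurable_cong_sets[OF refl] by blast
  qed
  have distr_g: "distr \<Omega> (two_point_meas p) g = two_point_meas p"
  proof (rule measure_eqI_finite[of _ "{0, 1}"])
    fix v :: real assume "v \<in> {0, 1}"
    then show "emeasure (distr \<Omega> (two_point_meas p) g) {v} = emeasure (two_point_meas p) {v}"
      using E p by (auto simp: emeasure_distr[OF g] g_0 g_1 emeasure_two_point_meas
          emeasure_eq_measure prob_compl)
  qed simp_all
  have H: "(\<lambda>\<omega>. (g \<omega>, Y \<omega>)) \<in> measurable \<Omega> (two_point_meas p \<Otimes>\<^sub>M \<rho>)"
    using g Y(1) by measurable
  then show "(\<lambda>\<omega>. (if \<omega> \<in> E then 0 else 1, Y \<omega>)) \<in> measurable \<Omega> (two_point_meas p \<Otimes>\<^sub>M \<rho>)"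
    by (simp add: g_def)
  have "distr \<Omega> (two_point_meas p \<Otimes>\<^sub>M \<rho>) (\<lambda>\<omega>. (g \<omega>, Y \<omega>)) \<in> couplings (two_point_meas p) \<rho>"
    unfolding couplings_def
    using prob_space_distr[OF H] distr_distr[OF measurable_fst H] distr_distr[OF measurable_snd H]
      distr_g Y(2) by (simp add: comp_def)
  then show "distr \<Omega> (two_point_meas p \<Otimes>\<^sub>M \<rho>) (\<lambda>\<omega>. (if \<omega> \<in> E then 0 else 1, Y \<omega>))
      \<in> couplings (two_point_meas p) \<rho>"
    by (simp add: g_def)
qed

lemma two_point_pair_sets:
  assumes "sets \<rho> = sets (borel :: real measure)"
  shows "{(0, a), (1, b)} \<in> sets (two_point_meas p \<Otimes>\<^sub>M \<rho>)"
proof -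
  have "{0} \<times> {a} \<in> sets (two_point_meas p \<Otimes>\<^sub>M \<rho>)" "{1} \<times> {b} \<in> sets (two_point_meas p \<Otimes>\<^sub>M \<rho>)"
    by (rule pair_measureI; simp add: assms)+
  moreover have "{(0, a), (1, b)} = {0} \<times> {a} \<union> {1} \<times> {b}" by auto
  ultimately show ?thesis by (metis sets.Un)
qed

text \<open>
  An independent uniform variable decides where to send each point of \<rho>: the atom a goes to
  0 with probability w0, every other point with probability w1.
\<close>

lemma two_point_coupling_atoms:
  fixes \<rho> :: "real measure"
  assumes \<rho>: "prob_space \<rho>" "sets \<rho> = sets borel" and ab: "a \<noteq> b"
    and w: "0 \<le> w0" "w0 \<le> 1" "0 \<le> w1" "w1 \<le> 1"
  defines "\<alpha> \<equiv> measure \<rho> {a}" and "\<beta> \<equiv> measure \<rho> {b}"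
  obtains \<pi> where "\<pi> \<in> couplings (two_point_meas (\<alpha> * w0 + (1 - \<alpha>) * w1)) \<rho>"
    "measure \<pi> {(0, a), (1, b)} = \<alpha> * w0 + \<beta> * (1 - w1)"
proof -
  interpret R: prob_space \<rho> by fact
  define \<Omega> where "\<Omega> = \<rho> \<Otimes>\<^sub>M unit_uniform"
  interpret \<Omega>: prob_space \<Omega>
    unfolding \<Omega>_def by (rule prob_space_pair[OF \<rho>(1) prob_space_unit_uniform])
  have space_\<rho>: "space \<rho> = UNIV" using sets_eq_imp_space_eq[OF \<rho>(2)] by simp
  have rect: "A \<times> B \<in> sets \<Omega>" if "A \<in> sets borel" "B \<in> sets borel" for A B
    unfolding \<Omega>_def using that \<rho>(2) by (intro pair_measureI) auto
  have measure_rect: "measure \<Omega> (A \<times> B) = measure \<rho> A * measure unit_uniform B"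
    if "A \<in> sets borel" "B \<in> sets borel" for A B
    unfolding \<Omega>_def using that \<rho>(2)
    by (intro measure_pair_measure_Times[OF \<rho>(1) prob_space_unit_uniform]) auto
  have compl_a: "measure \<rho> (- {a}) = 1 - \<alpha>"
    using R.prob_compl[of "{a}"] \<rho>(2) space_\<rho> by (simp add: \<alpha>_def Compl_eq_Diff_UNIV)
  define E where "E = {a} \<times> {..w0} \<union> (- {a}) \<times> {..w1}"
  have E: "E \<in> sets \<Omega>" unfolding E_def by (intro sets.Un rect) auto
  have "measure \<Omega> E = measure \<Omega> ({a} \<times> {..w0}) + measure \<Omega> ((- {a}) \<times> {..w1})"
    unfolding E_def by (rule \<Omega>.finite_measure_Union) (auto intro!: rect)
  also have "\<dots> = \<alpha> * w0 + (1 - \<alpha>) * w1"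
    using measure_rect[of "{a}" "{..w0}"] measure_rect[of "- {a}" "{..w1}"]
      measure_unit_uniform w compl_a by (simp add: \<alpha>_def)
  finally have measure_E: "measure \<Omega> E = \<alpha> * w0 + (1 - \<alpha>) * w1" .
  define H where "H \<omega> = (if \<omega> \<in> E then 0 else 1 :: real, fst \<omega>)" for \<omega>
  have "fst \<in> measurable \<Omega> \<rho>" "distr \<Omega> \<rho> fst = \<rho>"
    unfolding \<Omega>_def by (simp_all add: prob_space.distr_pair_fst[OF prob_space_unit_uniform])
  note coupling = two_point_coupling[OF \<Omega>.prob_space_axioms this E measure_E, folded H_def]
  define S where "S = {(0::real, a), (1, b)}"
  have S: "S \<in> sets (two_point_meas (\<alpha> * w0 + (1 - \<alpha>) * w1) \<Otimes>\<^sub>M \<rho>)"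
    unfolding S_def using \<rho>(2) by (rule two_point_pair_sets)
  have "H -` S \<inter> space \<Omega> = {a} \<times> {..w0} \<union> {b} \<times> {w1<..}"
    using ab by (auto simp: S_def H_def E_def \<Omega>_def space_pair_measure space_\<rho> split: if_splits)
  then have "measure (distr \<Omega> (two_point_meas (\<alpha> * w0 + (1 - \<alpha>) * w1) \<Otimes>\<^sub>M \<rho>) H) S
      = measure \<Omega> ({a} \<times> {..w0} \<union> {b} \<times> {w1<..})"
    using measure_distr[OF coupling(1) S] by simp
  also have "\<dots> = measure \<Omega> ({a} \<times> {..w0}) + measure \<Omega> ({b} \<times> {w1<..})"
    using ab by (intro \<Omega>.finite_measure_Union) (auto intro!: rect)
  also have "\<dots> = \<alpha> * w0 + \<beta> * (1 - w1)"
    using measure_rect[of "{a}" "{..w0}"] measure_rect[of "{b}" "{w1<..}"]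
      measure_unit_uniform w by (simp add: \<alpha>_def \<beta>_def)
  finally show ?thesis using that coupling(2) unfolding S_def by blast
qed

lemma box_dist_two_point_space_le:
  fixes \<rho> :: "real measure"
  assumes \<rho>: "prob_space \<rho>" "sets \<rho> = sets borel" and L: "0 < L" and p: "0 < p" "p < 1"
    and \<alpha>: "\<alpha> = measure \<rho> {a}" "0 < \<alpha>" "\<alpha> < 1" and \<beta>: "\<beta> = measure \<rho> {a + L}"
  shows "box_dist (two_point_space p) (mm_scale (1 / L) (UNIV, dist, \<rho>))
    \<le> ereal (\<bar>p - \<alpha>\<bar> + (1 - \<alpha> - \<beta>))"
proof -
  interpret R: prob_space \<rho> by fact
  define w0 where "w0 = (if p \<le> \<alpha> then p / \<alpha> else 1)"
  define w1 where "w1 = (if p \<le> \<alpha> then 0 else (p - \<alpha>) / (1 - \<alpha>))"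
  have w: "0 \<le> w0" "w0 \<le> 1" "0 \<le> w1" "w1 \<le> 1"
    unfolding w0_def w1_def using p \<alpha> by (auto simp: field_simps)
  have "\<alpha> * w0 + (1 - \<alpha>) * w1 = p" unfolding w0_def w1_def using \<alpha> by auto
  then obtain \<pi> where \<pi>: "\<pi> \<in> couplings (two_point_meas p) \<rho>"
    and measure_S: "measure \<pi> {(0, a), (1, a + L)} = \<alpha> * w0 + \<beta> * (1 - w1)"
    using two_point_coupling_atoms[OF \<rho> _ w, of a "a + L"] L \<alpha>(1) \<beta> by auto
  have S: "{(0, a), (1, a + L)} \<in> sets (two_point_meas p \<Otimes>\<^sub>M \<rho>)"
    using \<rho>(2) by (rule two_point_pair_sets)
  have "\<alpha> + \<beta> \<le> 1"
    using R.finite_measure_Union[of "{a}" "{a + L}"] R.prob_le_1[of "{a} \<union> {a + L}"] L \<alpha>(1) \<beta> \<rho>(2)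
    by simp
  have "1 - measure \<pi> {(0, a), (1, a + L)} \<le> \<bar>p - \<alpha>\<bar> + (1 - \<alpha> - \<beta>)"
  proof (cases "p \<le> \<alpha>")
    case True
    then show ?thesis unfolding measure_S w0_def w1_def using \<alpha> by simp
  next
    case False
    have "\<beta> / (1 - \<alpha>) \<le> 1" using \<open>\<alpha> + \<beta> \<le> 1\<close> \<alpha> by simp
    have "\<beta> * ((p - \<alpha>) / (1 - \<alpha>)) = (p - \<alpha>) * (\<beta> / (1 - \<alpha>))" by simp
    also have "\<dots> \<le> p - \<alpha>"
      using False \<open>\<beta> / (1 - \<alpha>) \<le> 1\<close> mult_left_mono[of "\<beta> / (1 - \<alpha>)" 1 "p - \<alpha>"] by simp
    finally show ?thesis unfolding measure_S w0_def w1_def using False by (simp add: right_diff_distrib)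
  qed
  moreover have "0 \<le> \<bar>p - \<alpha>\<bar> + (1 - \<alpha> - \<beta>)" using \<open>\<alpha> + \<beta> \<le> 1\<close> by simp
  moreover have "distortion (two_point_space p) (mm_scale (1 / L) (UNIV, dist, \<rho>)) {(0, a), (1, a + L)} = 0"
    using L unfolding distortion_def two_point_space_def by (simp add: dist_real_def)
  ultimately show ?thesis
    using \<pi> S unfolding box_dist_def two_point_space_def mm_tuple mm_scale_simps
    by (intro INF_lower2[of \<pi>] INF_lower2[of "{(0, a), (1, a + L)}"]) (auto simp: max_def)
qed

section \<open>Gaps of distributions on the line\<close>

context real_distribution
begin

lemma measure_three_intervals:
  assumes "a < b"
  shows "measure M {..a} + measure M {a<..<b} + measure M {b..} = 1"
proof -
  have "measure M ({..a} \<union> {a<..<b} \<union> {b..}) = measure M {..a} + measure M {a<..<b} + measure M {b..}"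
    using assms by (subst finite_measure_Union; auto)+
  moreover have "{..a} \<union> {a<..<b} \<union> {b..} = UNIV" by auto
  ultimately show ?thesis using prob_space by simp
qed

lemma cdf_quantile:
  assumes "0 < c" "c < 1"
  obtains x where "c \<le> cdf M x" "\<And>y. y < x \<Longrightarrow> cdf M y < c"
proof -
  define S where "S = {x. c \<le> cdf M x}"
  have "eventually (\<lambda>x. c < cdf M x) at_top"
    using order_tendstoD(1)[OF cdf_lim_at_top_prob] assms by simp
  then obtain x where "c < cdf M x" by (metis eventually_at_top_linorder order_refl)
  then have S_ne: "S \<noteq> {}" unfolding S_def by (auto intro: less_imp_le)
  have "eventually (\<lambda>x. cdf M x < c) at_bot"
    using order_tendstoD(2)[OF cdf_lim_at_bot] assms by simp
  then obtain b where b: "\<And>x. x \<le> b \<Longrightarrow> cdf M x < c" by (auto simp: eventually_at_bot_linorder)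
  have S_bdd: "bdd_below S"
  proof (rule bdd_belowI)
    fix s assume "s \<in> S"
    then show "b \<le> s" using b[of s] unfolding S_def by force
  qed
  have "c \<le> cdf M (Inf S)"
  proof (rule tendsto_lowerbound)
    show "(cdf M \<longlongrightarrow> cdf M (Inf S)) (at_right (Inf S))"
      using cdf_is_right_cont[of "Inf S"] by (simp add: continuous_within)
    show "eventually (\<lambda>y. c \<le> cdf M y) (at_right (Inf S))"
      using eventually_at_right_less[of "Inf S"]
    proof (rule eventually_mono)
      fix y assume "Inf S < y"
      then obtain s where "s \<in> S" "s < y" using cInf_less_iff[OF S_ne S_bdd] by blast
      then show "c \<le> cdf M y" unfolding S_def using cdf_nondecreasing[of s y] by auto
    qed
  qed simp
  moreover have "cdf M y < c" if "y < Inf S" for y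
    using cInf_lower[OF _ S_bdd, of y] that unfolding S_def by force
  ultimately show ?thesis using that by blast
qed

lemma partial_diam_gt_imp_tails:
  assumes "0 < R" "ereal R < partial_diam M kap"
  shows "kap < cdf M (x - R / 2) + measure M {x + R / 2..}"
proof (rule ccontr)
  assume small_tails: "\<not> ?thesis"
  define I where "I = {x - R / 2<..<x + R / 2}"
  have "cdf M (x - R / 2) + measure M I + measure M {x + R / 2..} = 1"
    unfolding I_def cdf_def using assms(1) by (intro measure_three_intervals) simp
  then have "1 - kap \<le> measure M I" using small_tails by linarith
  then have "partial_diam M kap \<le> (SUP y\<in>I. SUP z\<in>I. ereal \<bar>y - z\<bar>)"
    unfolding partial_diam_def by (intro INF_lower) (simp add: I_def)
  also have "\<dots> \<le> ereal R" unfolding I_def by (intro SUP_least) auto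
  finally show False using assms(2) by simp
qed

lemma small_measure_subinterval:
  fixes x L :: real and N :: nat
  assumes L: "0 < L" and N: "0 < N"
  obtains j :: nat where "j < N" "measure M {x + j * L<..<x + j * L + L} \<le> 1 / N"
proof -
  define D where "D j = cdf M (x + Suc j * L) - cdf M (x + j * L)" for j :: nat
  have "\<exists>j<N. D j \<le> 1 / N"
  proof (rule ccontr)
    assume "\<not> ?thesis"
    then have "(\<Sum>j<N. 1 / real N) < (\<Sum>j<N. D j)"
      using N by (intro sum_strict_mono) auto
    also have "(\<Sum>j<N. D j) = cdf M (x + N * L) - cdf M x"
      unfolding D_def using sum_lessThan_telescope[of "\<lambda>j. cdf M (x + j * L)" N] by simp
    also have "\<dots> \<le> 1" using cdf_bounded_prob[of "x + N * L"] cdf_nonneg[of x] by linarith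
    finally show False using N by simp
  qed
  then obtain j where j: "j < N" "D j \<le> 1 / N" by blast
  have "measure M {x + j * L<..<x + j * L + L} \<le> measure M {x + j * L<..x + j * L + L}"
    by (intro finite_measure_mono) auto
  also have "\<dots> = D j" unfolding D_def using L by (simp add: cdf_diff_eq algebra_simps)
  finally show ?thesis using that j by simp
qed

lemma partial_diam_gt_imp_gap:
  fixes L :: real and N :: nat
  assumes kap: "0 < kap" "kap < 1" and L: "0 < L" and N: "0 < N"
    and diam: "ereal (2 * N * L) < partial_diam M kap"
  obtains a where "kap / 2 \<le> measure M {..a}" "kap / 2 \<le> measure M {a + L..}"
    "measure M {a<..<a + L} \<le> 1 / N"
proof -
  obtain x where x: "kap / 2 \<le> cdf M x" "\<And>y. y < x \<Longrightarrow> cdf M y < kap / 2"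
    using cdf_quantile[of "kap / 2"] kap by auto
  have "kap < cdf M (x - N * L) + measure M {x + N * L..}"
    using partial_diam_gt_imp_tails[OF _ diam, of x] L N by simp
  moreover have "cdf M (x - N * L) < kap / 2" using x(2) L N by simp
  ultimately have right_tail: "kap / 2 \<le> measure M {x + N * L..}" by linarith
  obtain j where j: "j < N" "measure M {x + j * L<..<x + j * L + L} \<le> 1 / N"
    using small_measure_subinterval[OF L N] .
  have "kap / 2 \<le> measure M {..x + j * L}"
    using x(1) cdf_nondecreasing[of x "x + j * L"] L by (simp add: cdf_def)
  moreover have "kap / 2 \<le> measure M {x + j * L + L..}"
  proof -
    have "real j * L + L = real (Suc j) * L" by (simp add: algebra_simps)
    also have "\<dots> \<le> real N * L" using j(1) L by (intro mult_right_mono) auto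
    finally have "x + j * L + L \<le> x + N * L" by simp
    then have "measure M {x + N * L..} \<le> measure M {x + j * L + L..}"
      by (intro finite_measure_mono) auto
    then show ?thesis using right_tail by simp
  qed
  ultimately show ?thesis using that j(2) by blast
qed

end

lemma pyramid_real_line_image:
  assumes P: "pyramid P" and Y: "Y \<in> P" and f: "mm_lipschitz Y f"
  shows "(UNIV, dist, distr (mm_meas Y) borel f) \<in> P"
proof -
  have Y_mm: "mm_space Y" using Y P unfolding pyramid_def by auto
  have f_meas: "f \<in> borel_measurable (mm_meas Y)" by (rule mm_lipschitz_borel_measurable[OF Y_mm f])
  have "mm_space (UNIV, dist, distr (mm_meas Y) borel f)"
    using prob_space.prob_space_distr[OF mm_space_prob_space[OF Y_mm] f_meas]
    by (intro mm_space_real_line) simp_all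
  moreover have "mm_dominated (UNIV, dist, distr (mm_meas Y) borel f) Y"
    unfolding mm_dominated_def mm_tuple
    using f f_meas by (intro exI[of _ f]) (auto simp: dist_real_def intro: distr_cong)
  ultimately show ?thesis using P Y unfolding pyramid_def by blast
qed

lemma abs_clamp_diff_le: "\<bar>max a (min b x) - max a (min b y)\<bar> \<le> \<bar>x - y :: real\<bar>"
  by (auto simp: max_def min_def abs_if)

lemma pyramid_clamped_image:
  assumes P: "pyramid P" and Y: "Y \<in> P" and f: "mm_lipschitz Y f" and ab: "a < b"
  defines "\<nu> \<equiv> distr (mm_meas Y) borel f"
  obtains \<rho> where "(UNIV, dist, \<rho>) \<in> P" "prob_space \<rho>" "sets \<rho> = sets borel"
    "measure \<rho> {a} = measure \<nu> {..a}" "measure \<rho> {b} = measure \<nu> {b..}"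
proof -
  have Y_mm: "mm_space Y" using Y P unfolding pyramid_def by auto
  have f_meas: "f \<in> borel_measurable (mm_meas Y)" by (rule mm_lipschitz_borel_measurable[OF Y_mm f])
  define g where "g y = max a (min b (f y))" for y
  have g: "mm_lipschitz Y g"
    using f abs_clamp_diff_le[of a b] unfolding g_def by (blast intro: order_trans)
  have g_meas: "g \<in> borel_measurable (mm_meas Y)" by (rule mm_lipschitz_borel_measurable[OF Y_mm g])
  have "g y = a \<longleftrightarrow> f y \<le> a" "g y = b \<longleftrightarrow> b \<le> f y" for y
    using ab by (simp_all add: g_def max_def min_def)
  then have "g -` {a} \<inter> space (mm_meas Y) = f -` {..a} \<inter> space (mm_meas Y)"
    "g -` {b} \<inter> space (mm_meas Y) = f -` {b..} \<inter> space (mm_meas Y)"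
    by auto
  then have "measure (distr (mm_meas Y) borel g) {a} = measure \<nu> {..a}"
    "measure (distr (mm_meas Y) borel g) {b} = measure \<nu> {b..}"
    unfolding \<nu>_def by (simp_all add: measure_distr[OF g_meas] measure_distr[OF f_meas])
  moreover have "prob_space (distr (mm_meas Y) borel g)"
    by (rule prob_space.prob_space_distr[OF mm_space_prob_space[OF Y_mm] g_meas])
  moreover have "sets (distr (mm_meas Y) borel g) = sets borel" by simp
  ultimately show ?thesis by (intro that[OF pyramid_real_line_image[OF P Y g]])
qed

lemma pyramid_two_point_approx:
  fixes N :: nat
  assumes P: "pyramid P" and inf: "obs_diam_pyr P kap = \<infinity>" and kap: "0 < kap" "kap < 1"
    and N: "0 < N"
  obtains Y \<alpha> where "Y \<in> P" "kap / 2 \<le> \<alpha>" "\<alpha> \<le> 1 - kap / 2"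
    "\<And>p. 0 < p \<Longrightarrow> p < 1 \<Longrightarrow>
       box_dist (two_point_space p) (mm_scale (1 / N) Y) \<le> ereal (\<bar>p - \<alpha>\<bar> + 1 / N)"
proof -
  define L where "L = real N"
  have L: "0 < L" using N by (simp add: L_def)
  have "ereal (2 * N * L) < obs_diam_pyr P kap" using inf by simp
  then obtain Y0 where Y0: "Y0 \<in> P" and "ereal (2 * N * L) < obs_diam Y0 kap"
    unfolding obs_diam_pyr_def less_SUP_iff by blast
  then obtain f where f: "mm_lipschitz Y0 f"
    and diam: "ereal (2 * N * L) < partial_diam (distr (mm_meas Y0) borel f) kap"
    unfolding obs_diam_def less_SUP_iff by blast
  have Y0_mm: "mm_space Y0" using Y0 P unfolding pyramid_def by auto
  define \<nu> where "\<nu> = distr (mm_meas Y0) borel f"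
  interpret \<nu>: real_distribution \<nu>
    unfolding \<nu>_def using mm_space_prob_space[OF Y0_mm] mm_lipschitz_borel_measurable[OF Y0_mm f]
    by (simp add: prob_space.real_distribution_distr)
  obtain a where low: "kap / 2 \<le> measure \<nu> {..a}" and high: "kap / 2 \<le> measure \<nu> {a + L..}"
    and gap: "measure \<nu> {a<..<a + L} \<le> 1 / N"
    using \<nu>.partial_diam_gt_imp_gap[OF kap L N] diam unfolding \<nu>_def by blast
  have "a < a + L" using L by simp
  then obtain \<rho> where Y: "(UNIV, dist, \<rho>) \<in> P" and \<rho>: "prob_space \<rho>" "sets \<rho> = sets borel"
    and \<alpha>: "measure \<rho> {a} = measure \<nu> {..a}" and \<beta>: "measure \<rho> {a + L} = measure \<nu> {a + L..}"
    by (rule pyramid_clamped_image[OF P Y0 f, folded \<nu>_def])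
  have partition: "measure \<nu> {..a} + measure \<nu> {a<..<a + L} + measure \<nu> {a + L..} = 1"
    using L by (intro \<nu>.measure_three_intervals) simp
  have \<alpha>_upper: "measure \<nu> {..a} \<le> 1 - kap / 2"
    using partition high measure_nonneg[of \<nu> "{a<..<a + L}"] by linarith
  have \<alpha>_bounds: "0 < measure \<rho> {a}" "measure \<rho> {a} < 1" using \<alpha> low \<alpha>_upper kap by simp_all
  have "box_dist (two_point_space p) (mm_scale (1 / N) (UNIV, dist, \<rho>))
      \<le> ereal (\<bar>p - measure \<nu> {..a}\<bar> + 1 / N)" if p: "0 < p" "p < 1" for p
  proof -
    have "box_dist (two_point_space p) (mm_scale (1 / L) (UNIV, dist, \<rho>))
        \<le> ereal (\<bar>p - measure \<rho> {a}\<bar> + (1 - measure \<rho> {a} - measure \<rho> {a + L}))"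
      by (rule box_dist_two_point_space_le[OF \<rho> L p refl \<alpha>_bounds refl])
    also have "\<dots> \<le> ereal (\<bar>p - measure \<nu> {..a}\<bar> + 1 / N)" using \<alpha> \<beta> partition gap by simp
    finally show ?thesis by (simp add: L_def)
  qed
  then show ?thesis using that Y low \<alpha>_upper by blast
qed

lemma not_pyr_weak_conv_if_obs_diam_infinite:
  assumes P: "pyramid P" and inf: "\<not> obs_diam_finite P"
  obtains t :: "nat \<Rightarrow> real" where "\<And>k. 0 < t k" "t \<longlonglongrightarrow> 0"
    "\<not> pyr_weak_conv (\<lambda>k. pyr_scale (t k) P) pyr_star"
proof -
  obtain kap where kap: "0 < kap" "kap < 1" and "\<not> obs_diam_pyr P kap < \<infinity>"
    using inf unfolding obs_diam_finite_def by blast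
  then have "obs_diam_pyr P kap = \<infinity>" by (simp add: top.not_eq_extremum)
  then have "\<forall>k. \<exists>Y \<alpha>. Y \<in> P \<and> \<alpha> \<in> {kap / 2 .. 1 - kap / 2} \<and> (\<forall>p. 0 < p \<and> p < 1 \<longrightarrow>
      box_dist (two_point_space p) (mm_scale (1 / Suc k) Y) \<le> ereal (\<bar>p - \<alpha>\<bar> + 1 / Suc k))"
    using pyramid_two_point_approx[OF P _ kap zero_less_Suc] by (metis atLeastAtMost_iff)
  then obtain Y \<alpha> where Y: "\<And>k. Y k \<in> P" and \<alpha>: "\<And>k. \<alpha> k \<in> {kap / 2 .. 1 - kap / 2}"
    and box: "\<And>k p. 0 < p \<Longrightarrow> p < 1 \<Longrightarrow>
      box_dist (two_point_space p) (mm_scale (1 / Suc k) (Y k)) \<le> ereal (\<bar>p - \<alpha> k\<bar> + 1 / Suc k)"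
    by metis
  obtain p r where p: "p \<in> {kap / 2 .. 1 - kap / 2}" and r: "strict_mono r" and lim: "(\<alpha> \<circ> r) \<longlonglongrightarrow> p"
    using compact_Icc[THEN compact_imp_seq_compact, THEN seq_compactE] \<alpha> by metis
  have p01: "0 < p" "p < 1" using p kap by auto
  define t where "t k = 1 / Suc (r k)" for k
  have t: "0 < t k" for k by (simp add: t_def)
  have "(\<lambda>n. 1 / Suc n) \<longlonglongrightarrow> 0" using LIMSEQ_inverse_real_of_nat by (simp add: inverse_eq_divide)
  then have t_lim: "t \<longlonglongrightarrow> 0" unfolding t_def using LIMSEQ_subseq_LIMSEQ[OF _ r] by (simp add: comp_def)
  define e where "e k = \<bar>p - \<alpha> (r k)\<bar> + t k" for k
  have "e \<longlonglongrightarrow> \<bar>p - p\<bar> + 0"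
    unfolding e_def using lim t_lim by (intro tendsto_intros) (simp add: comp_def)
  then have e_lim: "(\<lambda>k. ereal (e k)) \<longlonglongrightarrow> ereal 0" by (simp add: tendsto_ereal)
  have "(INF Y\<in>pyr_scale (t k) P. box_dist (two_point_space p) Y) \<le> ereal (e k)" for k
    using box[OF p01, of "r k"] Y[of "r k"] unfolding pyr_scale_def e_def t_def
    by (meson INF_lower2 imageI)
  then have "liminf (\<lambda>k. INF Y\<in>pyr_scale (t k) P. box_dist (two_point_space p) Y)
      \<le> liminf (\<lambda>k. ereal (e k))"
    by (intro Liminf_mono) simp
  also have "\<dots> = 0" using lim_imp_Liminf[OF _ e_lim] by (simp add: zero_ereal_def)
  finally have "\<not> 0 < liminf (\<lambda>k. INF Y\<in>pyr_scale (t k) P. box_dist (two_point_space p) Y)"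
    by simp
  moreover have "mm_space (two_point_space p)" using p01 by (intro mm_space_two_point_space) auto
  moreover have "two_point_space p \<notin> pyr_star" using two_point_space_notin_pyr_star[OF p01] .
  ultimately have "\<not> pyr_weak_conv (\<lambda>k. pyr_scale (t k) P) pyr_star"
    unfolding pyr_weak_conv_def by blast
  then show ?thesis using that t t_lim by blast
qed

theorem lemma5p6:
  assumes "pyramid P"
  shows "obs_diam_finite P \<longleftrightarrow>
    (\<forall>t :: nat \<Rightarrow> real. (\<forall>k. 0 < t k) \<and> t \<longlonglongrightarrow> 0 \<longrightarrow>
       pyr_weak_conv (\<lambda>k. pyr_scale (t k) P) pyr_star)"
  using pyr_weak_conv_pyr_star_if_obs_diam_finite[OF assms]
    not_pyr_weak_conv_if_obs_diam_infinite[OF assms] by metis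

end
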